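(* Let $I=I_{\mathbf a,\mathbf b}\subset S=K[x,y]$ be a nonzero monomial ideal. Then: (a) if $a_m>0$, then $\mathrm{v}_{\mathfrak{p}_x}(I^k)=k(a_m+b_m)-1$ for all $k\ge1$; (b) if $b_1>0$, then $\mathrm{v}_{\mathfrak{p}_y}(I^k)=k(a_1+b_1)-1$ for all $k\ge1$.
   Context: $S=K[x,y]$ over a field $K$, standard graded, $S_d$ its degree-$d$ component. Every nonzero monomial ideal $I$ of $S$ has minimal monomial generating set $\{x^{a_1}y^{b_1},\dots,x^{a_m}y^{b_m}\}$ with $a_1>\dots>a_m\ge0$ and $0\le b_1<\dots<b_m$; this is denoted $I=I_{\mathbf a,\mathbf b}$. $\mathfrak{p}_x=(x)$, $\mathfrak{p}_y=(y)$. For a graded ideal $J$ and $\mathfrak{p}\in\operatorname{Ass}(J)$, $\mathrm{v}_\mathfrak{p}(J)=\min\{d:\exists f\in S_d \text{ with } (J:f)=\mathfrak{p}\}$. *)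

theory Defs
  imports "HOL-Computational_Algebra.Polynomial"
begin

text \<open>S = K[x,y] is modelled as 'a poly poly: outer variable y, inner variable x.
  The coefficient of x^i y^j in f is coeff (coeff f j) i.\<close>

type_synonym 'a bipoly = "'a poly poly"

definition xy_mono :: "nat \<Rightarrow> nat \<Rightarrow> 'a::field bipoly" where
  "xy_mono i j = monom (monom 1 i) j"

definition homog :: "nat \<Rightarrow> 'a::field bipoly \<Rightarrow> bool" where
  "homog d f \<longleftrightarrow> (\<forall>i j. coeff (coeff f j) i \<noteq> 0 \<longrightarrow> i + j = d)"

definition is_ideal :: "'a::comm_ring_1 set \<Rightarrow> bool" where
  "is_ideal J \<longleftrightarrow> 0 \<in> J \<and> (\<forall>a\<in>J. \<forall>b\<in>J. a + b \<in> J) \<and> (\<forall>r. \<forall>a\<in>J. r * a \<in> J)"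

definition ideal_gen :: "'a::comm_ring_1 set \<Rightarrow> 'a set" where
  "ideal_gen G = \<Inter>{J. is_ideal J \<and> G \<subseteq> J}"

definition ideal_mult :: "'a::comm_ring_1 set \<Rightarrow> 'a set \<Rightarrow> 'a set" where
  "ideal_mult A B = ideal_gen {a * b | a b. a \<in> A \<and> b \<in> B}"

fun ideal_pow :: "'a::comm_ring_1 set \<Rightarrow> nat \<Rightarrow> 'a set" where
  "ideal_pow J 0 = UNIV"
| "ideal_pow J (Suc k) = ideal_mult J (ideal_pow J k)"

definition colon :: "'a::comm_ring_1 set \<Rightarrow> 'a \<Rightarrow> 'a set" where
  "colon J f = {g. g * f \<in> J}"

definition is_prime_ideal :: "'a::comm_ring_1 set \<Rightarrow> bool" where
  "is_prime_ideal P \<longleftrightarrow> is_ideal P \<and> P \<noteq> UNIV \<and> (\<forall>a b. a * b \<in> P \<longrightarrow> a \<in> P \<or> b \<in> P)"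

definition Ass :: "'a::comm_ring_1 set \<Rightarrow> 'a set set" where
  "Ass J = {P. is_prime_ideal P \<and> (\<exists>f. colon J f = P)}"

definition v_num :: "'a::field bipoly set \<Rightarrow> 'a bipoly set \<Rightarrow> nat" where
  "v_num P J = (LEAST d. \<exists>f. homog d f \<and> colon J f = P)"

definition p_x :: "'a::field bipoly set" where "p_x = ideal_gen {xy_mono 1 0}"
definition p_y :: "'a::field bipoly set" where "p_y = ideal_gen {xy_mono 0 1}"

definition I_ab :: "nat \<Rightarrow> (nat \<Rightarrow> nat) \<Rightarrow> (nat \<Rightarrow> nat) \<Rightarrow> 'a::field bipoly set" where
  "I_ab m a b = ideal_gen {xy_mono (a i) (b i) | i. i \<in> {1..m}}"

end

theory Submission
  imports Defs
begin

text \<open>A monomial ideal J of K[x,y] is spanned by the monomials x^i y^j with (i, j) in an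
  up-closed exponent set E; products of monomial ideals correspond to sums of exponent sets, and
  (J : x^i y^j) to a shifted set. Let (p, q) be the lowest point in the leftmost column of E, with
  p \<ge> 1. Then (J : x^(p-1) y^q) = (x). Conversely, if (J : f) = (x) with f homogeneous, then
  y^q \<notin> (x) yields a term x^c y^e of f with x^c y^(e+q) \<notin> J, whereas x \<in> (x) gives
  x^(c+1) y^e \<in> J; together these force c = p - 1 and e \<ge> q, so deg f \<ge> p + q - 1.
  For I^k the corner is (k a_m, k b_m). The statement about (y) is the mirror image with the
  coordinates exchanged, the corner being (k a_1, k b_1).\<close>

lemma is_ideal_ideal_gen: "is_ideal (ideal_gen G)"
  unfolding ideal_gen_def is_ideal_def by auto

lemma ideal_gen_least: "is_ideal J \<Longrightarrow> G \<subseteq> J \<Longrightarrow> ideal_gen G \<subseteq> J"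
  unfolding ideal_gen_def by auto

lemma ideal_gen_superset: "G \<subseteq> ideal_gen G"
  unfolding ideal_gen_def by auto

lemma ideal_mult_closed: "is_ideal J \<Longrightarrow> x \<in> J \<Longrightarrow> r * x \<in> J"
  by (simp add: is_ideal_def)

lemma ideal_sum_closed:
  assumes "is_ideal J" "\<And>x. x \<in> A \<Longrightarrow> g x \<in> J"
  shows "sum g A \<in> J"
  using assms(2)
  by (induction A rule: infinite_finite_induct) (use assms(1) in \<open>simp_all add: is_ideal_def\<close>)

definition bcoeff :: "'a::zero bipoly \<Rightarrow> nat \<Rightarrow> nat \<Rightarrow> 'a" where
  "bcoeff f i j = coeff (coeff f j) i"

definition monomial_ideal :: "(nat \<times> nat) set \<Rightarrow> 'a::field bipoly set" where
  "monomial_ideal E = {f. \<forall>i j. bcoeff f i j \<noteq> 0 \<longrightarrow> (i, j) \<in> E}"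

definition up_closed :: "(nat \<times> nat) set \<Rightarrow> bool" where
  "up_closed E \<longleftrightarrow> (\<forall>i j i' j'. (i, j) \<in> E \<longrightarrow> i \<le> i' \<longrightarrow> j \<le> j' \<longrightarrow> (i', j') \<in> E)"

definition up_closure :: "(nat \<times> nat) set \<Rightarrow> (nat \<times> nat) set" where
  "up_closure G = {(i, j). \<exists>p q. (p, q) \<in> G \<and> p \<le> i \<and> q \<le> j}"

definition up_sum :: "(nat \<times> nat) set \<Rightarrow> (nat \<times> nat) set \<Rightarrow> (nat \<times> nat) set" where
  "up_sum A B = {(i, j). \<exists>p q r s. (p, q) \<in> A \<and> (r, s) \<in> B \<and> p + r \<le> i \<and> q + s \<le> j}"

lemma up_closedD: "up_closed E \<Longrightarrow> (i, j) \<in> E \<Longrightarrow> i \<le> i' \<Longrightarrow> j \<le> j' \<Longrightarrow> (i', j') \<in> E"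
  unfolding up_closed_def by blast

lemma up_closed_UNIV: "up_closed UNIV"
  by (simp add: up_closed_def)

lemma up_closed_up_closure: "up_closed (up_closure G)"
  unfolding up_closed_def up_closure_def by (auto intro: le_trans)

lemma up_closed_up_sum: "up_closed (up_sum A B)"
  unfolding up_closed_def up_sum_def by (fastforce intro: le_trans)

lemma up_closed_swap_image: "up_closed (prod.swap ` E) \<longleftrightarrow> up_closed E"
  unfolding up_closed_def by (metis pair_in_swap_image)

lemma up_sum_up_closure_left: "up_sum (up_closure A) B = up_sum A B"
  unfolding up_sum_def up_closure_def by (fastforce intro: add_le_mono le_trans)

lemma up_sum_swap_image: "up_sum (prod.swap ` A) (prod.swap ` B) = prod.swap ` up_sum A B"
proof -
  have "(i, j) \<in> up_sum (prod.swap ` A) (prod.swap ` B) \<longleftrightarrow> (j, i) \<in> up_sum A B" for i j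
    unfolding up_sum_def by (simp only: pair_in_swap_image mem_Collect_eq prod.case) blast
  then show ?thesis by (smt (verit) pair_in_swap_image set_eqI surj_pair)
qed

lemma bcoeff_add: "bcoeff (f + g) i j = bcoeff f i j + bcoeff g i j"
  by (simp add: bcoeff_def)

lemma bcoeff_mult:
  "bcoeff (f * g) i j = (\<Sum>j1\<le>j. \<Sum>i1\<le>i. bcoeff f i1 j1 * bcoeff g (i - i1) (j - j1))"
  by (simp add: bcoeff_def coeff_mult coeff_sum)

lemma bcoeff_mult_nonzeroD:
  fixes f g :: "'a::field bipoly"
  assumes "bcoeff (f * g) i j \<noteq> 0"
  obtains i1 j1 where "i1 \<le> i" "j1 \<le> j" "bcoeff f i1 j1 \<noteq> 0" "bcoeff g (i - i1) (j - j1) \<noteq> 0"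
proof -
  from assms obtain j1 i1 where "j1 \<le> j" "i1 \<le> i" "bcoeff f i1 j1 * bcoeff g (i - i1) (j - j1) \<noteq> 0"
    unfolding bcoeff_mult by (meson atMost_iff sum.not_neutral_contains_not_neutral)
  then show thesis using that by auto
qed

lemma bcoeff_xy_mono: "bcoeff (xy_mono p q) i j = (if i = p \<and> j = q then 1 else 0)"
  by (simp add: bcoeff_def xy_mono_def coeff_monom)

lemma bcoeff_xy_mono_mult:
  "bcoeff (xy_mono p q * f) i j = (if p \<le> i \<and> q \<le> j then bcoeff f (i - p) (j - q) else 0)"
  by (simp add: bcoeff_def xy_mono_def coeff_monom_mult)

lemma xy_mono_mult: "xy_mono a b * xy_mono c d = xy_mono (a + c) (b + d)"
  by (simp add: xy_mono_def mult_monom)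

lemma homog_xy_mono: "homog (p + q) (xy_mono p q)"
  by (auto simp: homog_def xy_mono_def coeff_monom split: if_splits)

lemma is_ideal_monomial_ideal:
  assumes "up_closed E"
  shows "is_ideal (monomial_ideal E)"
  unfolding is_ideal_def
proof (intro conjI ballI allI)
  fix f g :: "'a bipoly" assume "f \<in> monomial_ideal E" "g \<in> monomial_ideal E"
  then show "f + g \<in> monomial_ideal E"
    unfolding monomial_ideal_def by (auto simp: bcoeff_add) (metis add.right_neutral add_0)
next
  fix r f :: "'a bipoly" assume f: "f \<in> monomial_ideal E"
  show "r * f \<in> monomial_ideal E"
    unfolding monomial_ideal_def
  proof (intro CollectI allI impI)
    fix i j assume "bcoeff (r * f) i j \<noteq> 0"
    then obtain i1 j1 where "i1 \<le> i" "j1 \<le> j" "bcoeff f (i - i1) (j - j1) \<noteq> 0"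
      by (rule bcoeff_mult_nonzeroD)
    with f have "(i - i1, j - j1) \<in> E" by (auto simp: monomial_ideal_def)
    with assms show "(i, j) \<in> E" by (rule up_closedD) auto
  qed
qed (simp add: monomial_ideal_def bcoeff_def)

lemma xy_mono_in_monomial_ideal_iff: "xy_mono i j \<in> monomial_ideal E \<longleftrightarrow> (i, j) \<in> E"
  by (auto simp: monomial_ideal_def bcoeff_xy_mono)

lemma xy_mono_mult_in_monomial_ideal_iff:
  "xy_mono p q * f \<in> monomial_ideal E \<longleftrightarrow> (\<forall>i j. bcoeff f i j \<noteq> 0 \<longrightarrow> (i + p, j + q) \<in> E)"
proof -
  have "bcoeff (xy_mono p q * f) (i + p) (j + q) = bcoeff f i j" for i j
    by (simp add: bcoeff_xy_mono_mult)
  moreover have "bcoeff (xy_mono p q * f) i j \<noteq> 0 \<Longrightarrow> p \<le> i \<and> q \<le> j" for i j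
    by (simp add: bcoeff_xy_mono_mult split: if_splits)
  ultimately show ?thesis
    unfolding monomial_ideal_def by (smt (verit) le_add_diff_inverse2 mem_Collect_eq)
qed

lemma colon_monomial_ideal_xy_mono:
  "colon (monomial_ideal E) (xy_mono p q) = monomial_ideal {(i, j). (i + p, j + q) \<in> E}"
proof -
  have "g * xy_mono p q \<in> monomial_ideal E \<longleftrightarrow> g \<in> monomial_ideal {(i, j). (i + p, j + q) \<in> E}"
    for g :: "'a bipoly"
    by (subst mult.commute, simp only: xy_mono_mult_in_monomial_ideal_iff) (simp add: monomial_ideal_def)
  then show ?thesis by (auto simp: colon_def)
qed

lemma monomial_ideal_subset:
  assumes J: "is_ideal J" and E: "\<And>i j. (i, j) \<in> E \<Longrightarrow> xy_mono i j \<in> J"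
  shows "monomial_ideal E \<subseteq> J"
proof
  fix f :: "'a bipoly" assume f: "f \<in> monomial_ideal E"
  have monom_in_J: "monom (monom (bcoeff f i j) i) j \<in> J" for i j
  proof (cases "bcoeff f i j = 0")
    case False
    then have "xy_mono i j \<in> J" using f E by (auto simp: monomial_ideal_def)
    then have "[:[:bcoeff f i j:]:] * xy_mono i j \<in> J" by (rule ideal_mult_closed[OF J])
    then show ?thesis by (simp add: xy_mono_def mult_monom flip: monom_0)
  qed (use J in \<open>simp add: is_ideal_def\<close>)
  have "f = (\<Sum>j\<le>degree f. \<Sum>i\<le>degree (coeff f j). monom (monom (bcoeff f i j) i) j)"
    by (simp add: bcoeff_def flip: monom_sum) (simp add: poly_as_sum_of_monoms)
  also have "\<dots> \<in> J" by (intro ideal_sum_closed[OF J] monom_in_J)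
  finally show "f \<in> J" .
qed

lemma ideal_gen_xy_monos:
  "ideal_gen {xy_mono p q | p q. (p, q) \<in> G} = monomial_ideal (up_closure G)"
    (is "ideal_gen ?M = _")
proof
  show "ideal_gen ?M \<subseteq> monomial_ideal (up_closure G)"
  proof (rule ideal_gen_least[OF is_ideal_monomial_ideal[OF up_closed_up_closure]], safe)
    fix p q assume "(p, q) \<in> G"
    then show "xy_mono p q \<in> monomial_ideal (up_closure G)"
      unfolding xy_mono_in_monomial_ideal_iff up_closure_def by blast
  qed
  show "monomial_ideal (up_closure G) \<subseteq> ideal_gen ?M"
  proof (rule monomial_ideal_subset[OF is_ideal_ideal_gen])
    fix i j assume "(i, j) \<in> up_closure G"
    then obtain p q where pq: "(p, q) \<in> G" "p \<le> i" "q \<le> j" by (auto simp: up_closure_def)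
    then have "xy_mono p q \<in> ?M" by blast
    then have "xy_mono p q \<in> ideal_gen ?M" by (rule ideal_gen_superset[THEN subsetD])
    then have "xy_mono (i - p) (j - q) * xy_mono p q \<in> ideal_gen ?M"
      by (rule ideal_mult_closed[OF is_ideal_ideal_gen])
    with pq show "xy_mono i j \<in> ideal_gen ?M" by (simp add: xy_mono_mult)
  qed
qed

lemma ideal_mult_monomial_ideal:
  "ideal_mult (monomial_ideal A :: 'a::field bipoly set) (monomial_ideal B) = monomial_ideal (up_sum A B)"
proof -
  let ?P = "{f * g | f g. f \<in> (monomial_ideal A :: 'a bipoly set) \<and> g \<in> monomial_ideal B}"
  show ?thesis unfolding ideal_mult_def
proof
  show "ideal_gen ?P \<subseteq> monomial_ideal (up_sum A B)"
  proof (rule ideal_gen_least[OF is_ideal_monomial_ideal[OF up_closed_up_sum]], safe)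
    fix f g :: "'a bipoly" assume f: "f \<in> monomial_ideal A" and g: "g \<in> monomial_ideal B"
    show "f * g \<in> monomial_ideal (up_sum A B)"
      unfolding monomial_ideal_def
    proof (intro CollectI allI impI)
      fix i j assume "bcoeff (f * g) i j \<noteq> 0"
      then obtain i1 j1 where le: "i1 \<le> i" "j1 \<le> j"
        and "bcoeff f i1 j1 \<noteq> 0" "bcoeff g (i - i1) (j - j1) \<noteq> 0"
        by (rule bcoeff_mult_nonzeroD)
      with f g have "(i1, j1) \<in> A" "(i - i1, j - j1) \<in> B"
        by (auto simp: monomial_ideal_def)
      with le show "(i, j) \<in> up_sum A B"
        unfolding up_sum_def by fastforce
    qed
  qed
  show "monomial_ideal (up_sum A B) \<subseteq> ideal_gen ?P"
  proof (rule monomial_ideal_subset[OF is_ideal_ideal_gen])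
    fix i j assume "(i, j) \<in> up_sum A B"
    then obtain p q r s where h: "(p, q) \<in> A" "(r, s) \<in> B" "p + r \<le> i" "q + s \<le> j"
      by (auto simp: up_sum_def)
    then have "xy_mono p q * xy_mono r s \<in> ?P"
      using xy_mono_in_monomial_ideal_iff by blast
    then have "xy_mono p q * xy_mono r s \<in> ideal_gen ?P"
      by (rule ideal_gen_superset[THEN subsetD])
    then have "xy_mono (i - p - r) (j - q - s) * (xy_mono p q * xy_mono r s) \<in> ideal_gen ?P"
      by (rule ideal_mult_closed[OF is_ideal_ideal_gen])
    with h show "xy_mono i j \<in> ideal_gen ?P" by (simp add: xy_mono_mult)
  qed
qed
qed

lemma monomial_ideal_UNIV: "monomial_ideal UNIV = UNIV"
  by (simp add: monomial_ideal_def)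

fun exps_pow :: "(nat \<times> nat) set \<Rightarrow> nat \<Rightarrow> (nat \<times> nat) set" where
  "exps_pow G 0 = UNIV"
| "exps_pow G (Suc k) = up_sum G (exps_pow G k)"

lemma ideal_pow_monomial_ideal:
  "ideal_pow (monomial_ideal (up_closure G)) k = monomial_ideal (exps_pow G k)"
  by (induction k) (simp_all add: monomial_ideal_UNIV ideal_mult_monomial_ideal up_sum_up_closure_left)

lemma up_closed_exps_pow: "up_closed (exps_pow G k)"
  by (cases k) (simp_all add: up_closed_UNIV up_closed_up_sum)

lemma exps_pow_swap_image: "exps_pow (prod.swap ` G) k = prod.swap ` exps_pow G k"
  by (induction k) (simp_all add: up_sum_swap_image)

definition leftmost_corner :: "(nat \<times> nat) set \<Rightarrow> nat \<Rightarrow> nat \<Rightarrow> bool" where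
  "leftmost_corner E p q \<longleftrightarrow> (p, q) \<in> E \<and> (\<forall>i j. (i, j) \<in> E \<longrightarrow> p \<le> i \<and> (i = p \<longrightarrow> q \<le> j))"

lemma leftmost_corner_exps_pow:
  assumes "leftmost_corner G p q"
  shows "leftmost_corner (exps_pow G k) (k * p) (k * q)"
proof (induction k)
  case 0
  then show ?case by (simp add: leftmost_corner_def)
next
  case (Suc k)
  have "(p + k * p, q + k * q) \<in> up_sum G (exps_pow G k)"
    using assms Suc unfolding leftmost_corner_def up_sum_def by blast
  moreover have "Suc k * p \<le> i \<and> (i = Suc k * p \<longrightarrow> Suc k * q \<le> j)"
    if "(i, j) \<in> up_sum G (exps_pow G k)" for i j
  proof -
    from that obtain p' q' r s where "(p', q') \<in> G" "(r, s) \<in> exps_pow G k"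
      and le: "p' + r \<le> i" "q' + s \<le> j"
      by (auto simp: up_sum_def)
    with assms Suc have "p \<le> p' \<and> (p' = p \<longrightarrow> q \<le> q')" "k * p \<le> r \<and> (r = k * p \<longrightarrow> k * q \<le> s)"
      unfolding leftmost_corner_def by blast+
    with le show ?thesis by auto
  qed
  ultimately show ?case by (simp add: leftmost_corner_def)
qed

lemma leftmost_corner_shift_eq:
  assumes "up_closed E" "leftmost_corner E p q" "1 \<le> p"
  shows "{(i, j). (i + (p - 1), j + q) \<in> E} = {(i, j). 1 \<le> i}"
proof (intro set_eqI iffI; clarify)
  fix i j assume "(i + (p - 1), j + q) \<in> E"
  with assms(2,3) show "1 \<le> i" unfolding leftmost_corner_def by fastforce
next
  fix i j :: nat assume "1 \<le> i"
  with assms(3) have "p \<le> i + (p - 1)" by simp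
  with assms(1,2) show "(i + (p - 1), j + q) \<in> E"
    unfolding leftmost_corner_def by (blast intro: up_closedD le_add2)
qed

lemma leftmost_corner_degree_bound:
  assumes "up_closed E" "leftmost_corner E p q" "(c, e + q) \<notin> E" "(c + 1, e) \<in> E"
  shows "p + q \<le> c + e + 1"
proof -
  have "c < p"
  proof (rule ccontr)
    assume "\<not> c < p"
    with assms(1,2) have "(c, e + q) \<in> E"
      unfolding leftmost_corner_def by (blast intro: up_closedD le_add2 leI)
    with assms(3) show False by contradiction
  qed
  moreover from assms(2,4) have "p \<le> c + 1 \<and> (c + 1 = p \<longrightarrow> q \<le> e)"
    unfolding leftmost_corner_def by blast
  ultimately show ?thesis by linarith
qed

definition p_x_exps :: "(nat \<times> nat) set" where
  "p_x_exps = {(i, j). 1 \<le> i}"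

definition p_y_exps :: "(nat \<times> nat) set" where
  "p_y_exps = {(i, j). 1 \<le> j}"

lemma p_x_eq_monomial_ideal: "p_x = monomial_ideal p_x_exps"
proof -
  have gens: "{xy_mono 1 0} = {xy_mono p q | p q. (p, q) \<in> {(1, 0)}}" by auto
  have "up_closure {(1, 0)} = p_x_exps" by (auto simp: up_closure_def p_x_exps_def)
  then show ?thesis unfolding p_x_def gens ideal_gen_xy_monos by simp
qed

lemma p_y_eq_monomial_ideal: "p_y = monomial_ideal p_y_exps"
proof -
  have gens: "{xy_mono 0 1} = {xy_mono p q | p q. (p, q) \<in> {(0, 1)}}" by auto
  have "up_closure {(0, 1)} = p_y_exps" by (auto simp: up_closure_def p_y_exps_def)
  then show ?thesis unfolding p_y_def gens ideal_gen_xy_monos by simp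
qed

definition subst_x0 :: "'a::zero bipoly \<Rightarrow> 'a poly" where
  "subst_x0 f = map_poly (\<lambda>c. coeff c 0) f"

lemma coeff_subst_x0: "coeff (subst_x0 f) j = bcoeff f 0 j"
  by (simp add: subst_x0_def bcoeff_def coeff_map_poly)

lemma subst_x0_mult: "subst_x0 (f * g) = subst_x0 f * subst_x0 (g :: 'a::comm_semiring_0 bipoly)"
  by (rule poly_eqI) (simp add: coeff_subst_x0 bcoeff_def coeff_mult coeff_sum coeff_mult_0)

lemma in_monomial_ideal_p_x_exps_iff: "f \<in> monomial_ideal p_x_exps \<longleftrightarrow> subst_x0 f = 0"
proof -
  have "f \<in> monomial_ideal p_x_exps \<longleftrightarrow> (\<forall>j. bcoeff f 0 j = 0)"
    unfolding monomial_ideal_def p_x_exps_def by (auto simp: Suc_le_eq) (metis gr0I)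
  then show ?thesis by (simp add: poly_eq_iff coeff_subst_x0)
qed

lemma in_monomial_ideal_p_y_exps_iff: "f \<in> monomial_ideal p_y_exps \<longleftrightarrow> coeff f 0 = 0"
proof -
  have "f \<in> monomial_ideal p_y_exps \<longleftrightarrow> (\<forall>i. bcoeff f i 0 = 0)"
    unfolding monomial_ideal_def p_y_exps_def by (auto simp: Suc_le_eq) (metis gr0I)
  then show ?thesis by (simp add: poly_eq_iff bcoeff_def)
qed

lemma is_prime_ideal_p_x: "is_prime_ideal p_x"
proof -
  have "up_closed p_x_exps" by (auto simp: up_closed_def p_x_exps_def)
  moreover have "subst_x0 1 \<noteq> 0" by (simp add: poly_eq_iff coeff_subst_x0 bcoeff_def)
  ultimately show ?thesis
    unfolding is_prime_ideal_def p_x_eq_monomial_ideal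
    by (auto simp: is_ideal_monomial_ideal in_monomial_ideal_p_x_exps_iff subst_x0_mult)
qed

lemma is_prime_ideal_p_y: "is_prime_ideal (p_y :: 'a::field bipoly set)"
proof -
  have "up_closed p_y_exps" by (auto simp: up_closed_def p_y_exps_def)
  moreover have "monomial_ideal p_y_exps \<noteq> (UNIV :: 'a bipoly set)"
    using in_monomial_ideal_p_y_exps_iff[of "1 :: 'a bipoly"] by auto
  ultimately show ?thesis
    unfolding is_prime_ideal_def p_y_eq_monomial_ideal
    by (auto simp: is_ideal_monomial_ideal in_monomial_ideal_p_y_exps_iff coeff_mult_0)
qed

lemma xy_mono_mult_in_iff_of_colon_eq:
  assumes "colon J f = monomial_ideal F"
  shows "xy_mono i j * f \<in> J \<longleftrightarrow> (i, j) \<in> F"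
  using assms xy_mono_in_monomial_ideal_iff[of i j F]
  by (auto simp: colon_def mult.commute[of f] set_eq_iff)

lemma p_x_Ass_v_num:
  assumes E: "up_closed E" and corner: "leftmost_corner E p q" and p: "1 \<le> p"
  shows "p_x \<in> Ass (monomial_ideal E :: 'a::field bipoly set)
    \<and> v_num p_x (monomial_ideal E :: 'a bipoly set) = p + q - 1"
proof -
  let ?J = "monomial_ideal E :: 'a bipoly set"
  have colon: "colon ?J (xy_mono (p - 1) q) = p_x"
    using leftmost_corner_shift_eq[OF assms]
    by (simp add: colon_monomial_ideal_xy_mono p_x_eq_monomial_ideal p_x_exps_def)
  have homog: "homog (p + q - 1) (xy_mono (p - 1) q :: 'a bipoly)"
    using homog_xy_mono[of "p - 1" q] p by simp
  have "p + q - 1 \<le> d" if f: "homog d f" "colon ?J f = p_x" for d f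
  proof -
    note mem = xy_mono_mult_in_iff_of_colon_eq[OF f(2)[unfolded p_x_eq_monomial_ideal]]
    from mem[of 0 q] obtain c e where ce: "bcoeff f c e \<noteq> 0" "(c, e + q) \<notin> E"
      by (auto simp: xy_mono_mult_in_monomial_ideal_iff p_x_exps_def)
    from mem[of 1 0] ce(1) have "(c + 1, e) \<in> E"
      by (simp add: xy_mono_mult_in_monomial_ideal_iff p_x_exps_def)
    with E corner ce(2) have "p + q \<le> c + e + 1"
      by (rule leftmost_corner_degree_bound)
    moreover have "c + e = d" using f(1) ce(1) by (simp add: homog_def bcoeff_def)
    ultimately show ?thesis by simp
  qed
  with homog colon have "v_num p_x ?J = p + q - 1"
    unfolding v_num_def by (blast intro: Least_equality)
  moreover have "p_x \<in> Ass ?J"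
    using is_prime_ideal_p_x colon unfolding Ass_def by blast
  ultimately show ?thesis by simp
qed

lemma p_y_Ass_v_num:
  assumes E: "up_closed E" and corner: "leftmost_corner (prod.swap ` E) q p" and q: "1 \<le> q"
  shows "p_y \<in> Ass (monomial_ideal E :: 'a::field bipoly set)
    \<and> v_num p_y (monomial_ideal E :: 'a bipoly set) = p + q - 1"
proof -
  let ?J = "monomial_ideal E :: 'a bipoly set"
  have E': "up_closed (prod.swap ` E)" using E by (simp add: up_closed_swap_image)
  have "{(i, j). (i + p, j + (q - 1)) \<in> E} = p_y_exps"
    using leftmost_corner_shift_eq[OF E' corner q] by (auto simp: p_y_exps_def set_eq_iff)
  then have colon: "colon ?J (xy_mono p (q - 1)) = p_y"
    by (simp add: colon_monomial_ideal_xy_mono p_y_eq_monomial_ideal)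
  have homog: "homog (p + q - 1) (xy_mono p (q - 1) :: 'a bipoly)"
    using homog_xy_mono[of p "q - 1"] q by simp
  have "p + q - 1 \<le> d" if f: "homog d f" "colon ?J f = p_y" for d f
  proof -
    note mem = xy_mono_mult_in_iff_of_colon_eq[OF f(2)[unfolded p_y_eq_monomial_ideal]]
    from mem[of p 0] obtain c e where ce: "bcoeff f c e \<noteq> 0" "(c + p, e) \<notin> E"
      by (auto simp: xy_mono_mult_in_monomial_ideal_iff p_y_exps_def)
    from mem[of 0 1] ce(1) have "(c, e + 1) \<in> E"
      by (simp add: xy_mono_mult_in_monomial_ideal_iff p_y_exps_def)
    then have "(e + 1, c) \<in> prod.swap ` E" by (simp only: pair_in_swap_image)
    moreover from ce(2) have "(e, c + p) \<notin> prod.swap ` E" by simp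
    ultimately have "q + p \<le> e + c + 1"
      using E' corner by (intro leftmost_corner_degree_bound)
    moreover have "c + e = d" using f(1) ce(1) by (simp add: homog_def bcoeff_def)
    ultimately show ?thesis by simp
  qed
  with homog colon have "v_num p_y ?J = p + q - 1"
    unfolding v_num_def by (blast intro: Least_equality)
  moreover have "p_y \<in> Ass ?J"
    using is_prime_ideal_p_y colon unfolding Ass_def by blast
  ultimately show ?thesis by simp
qed

definition gen_exps :: "nat \<Rightarrow> (nat \<Rightarrow> nat) \<Rightarrow> (nat \<Rightarrow> nat) \<Rightarrow> (nat \<times> nat) set" where
  "gen_exps m a b = {(a i, b i) | i. i \<in> {1..m}}"

lemma I_ab_eq_monomial_ideal: "I_ab m a b = monomial_ideal (up_closure (gen_exps m a b))"
proof -
  have gens: "{xy_mono (a i) (b i) | i. i \<in> {1..m}} = {xy_mono p q | p q. (p, q) \<in> gen_exps m a b}"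
    by (auto simp: gen_exps_def)
  show ?thesis unfolding I_ab_def gens ideal_gen_xy_monos ..
qed

context
  fixes m :: nat and a b :: "nat \<Rightarrow> nat"
  assumes m: "1 \<le> m"
    and strict: "\<And>i j. 1 \<le> i \<Longrightarrow> i < j \<Longrightarrow> j \<le> m \<Longrightarrow> a i > a j \<and> b i < b j"
begin

lemma leftmost_corner_gen_exps: "leftmost_corner (gen_exps m a b) (a m) (b m)"
proof -
  have "a m \<le> a i \<and> (a i = a m \<longrightarrow> b m \<le> b i)" if "i \<in> {1..m}" for i
    using strict[of i m] that by (cases "i = m") auto
  then show ?thesis using m unfolding leftmost_corner_def gen_exps_def by auto
qed

lemma leftmost_corner_swap_gen_exps: "leftmost_corner (prod.swap ` gen_exps m a b) (b 1) (a 1)"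
proof -
  have "b 1 \<le> b i \<and> (b i = b 1 \<longrightarrow> a 1 \<le> a i)" if "i \<in> {1..m}" for i
    using strict[of 1 i] that by (cases "i = 1") auto
  then show ?thesis using m unfolding leftmost_corner_def gen_exps_def by auto
qed

end

theorem corollary5p4:
  fixes m :: nat and a b :: "nat \<Rightarrow> nat"
  assumes "m \<ge> 1"
    and "\<And>i j. 1 \<le> i \<Longrightarrow> i < j \<Longrightarrow> j \<le> m \<Longrightarrow> a i > a j \<and> b i < b j"
  shows "(a m > 0 \<longrightarrow> (\<forall>k\<ge>1.
            p_x \<in> Ass (ideal_pow (I_ab m a b :: 'a::field bipoly set) k) \<and>
            v_num p_x (ideal_pow (I_ab m a b :: 'a bipoly set) k) = k * (a m + b m) - 1))
       \<and> (b 1 > 0 \<longrightarrow> (\<forall>k\<ge>1.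
            p_y \<in> Ass (ideal_pow (I_ab m a b :: 'a bipoly set) k) \<and>
            v_num p_y (ideal_pow (I_ab m a b :: 'a bipoly set) k) = k * (a 1 + b 1) - 1))"
proof -
  let ?G = "gen_exps m a b"
  have pow: "ideal_pow (I_ab m a b :: 'a bipoly set) k = monomial_ideal (exps_pow ?G k)" for k
    by (simp add: I_ab_eq_monomial_ideal ideal_pow_monomial_ideal)
  have x_corner: "leftmost_corner (exps_pow ?G k) (k * a m) (k * b m)" for k
    using leftmost_corner_exps_pow[OF leftmost_corner_gen_exps[OF assms]] .
  have y_corner: "leftmost_corner (prod.swap ` exps_pow ?G k) (k * b 1) (k * a 1)" for k
    using leftmost_corner_exps_pow[OF leftmost_corner_swap_gen_exps[OF assms]]
    by (simp add: exps_pow_swap_image)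
  show ?thesis
    unfolding pow add_mult_distrib2
    using p_x_Ass_v_num[OF up_closed_exps_pow x_corner] p_y_Ass_v_num[OF up_closed_exps_pow y_corner]
    by (auto simp: Suc_le_eq)
qed

end
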